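(* Let $a:[0,\infty)\times\mathcal T\to[0,\infty)$ be convex in its first argument with $\lim_{x\uparrow\infty}a(x,t_n)/x<R<\infty$ for each $n$. Suppose the reals $e^1_{j,n},e^2_{j,n},v_{j,n}$ ($0\le j\le J+1$, $1\le n\le N$), $d^1_{j,n},d^2_{j,n}$ ($0\le j\le J+1$, $1\le n\le N-1$) satisfy the feasibility conditions of $\mathbf L_H^{\mathcal X,\infty,\mathcal T}$. For each $n$ let $\bar e^1_n,\bar e^2_n,\bar v_n$ be the extended linear interpolations of $(e^1_{j,n})_{0\le j\le J+1}$, $(e^2_{j,n})_{0\le j\le J+1}$, $(v_{j,n})_{0\le j\le J+1}$, let $\tilde d^\delta_n$ be the mixed interpolation on $[0,x_J]$ and for $x>x_J$ set $\tilde d^1_n(x)=\min\{d^1_{J,n},e^1_{J+1,n}\}$ and $\tilde d^2_n(x)=\min\{d^2_{J,n},e^1_{J+1,n}-v_{J+1,n}\}$. Set also $\bar e^1_N\equiv0\equiv\bar e^2_1$. Then \[\bar v_n(x)\ge a(x,t_n)\quad (x\ge0,\ 1\le n\le N),\] \[\bar e^1_n(x)+\bar e^2_{n+1}(y)+(y-x)\tilde d^1_n(x)\ge0\quad(x,y\ge0,\ 1\le n<N),\] \[\bar e^1_n(x)+\bar e^2_{n+1}(y)+(y-x)\tilde d^2_n(x)-\bar v_n(x)+\bar v_{n+1}(y)\ge0\quad(x,y\ge0,\ 1\le n<N).\]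
   Context: Fix $N\ge1$, $J\ge1$, times $0=t_0<t_1<\dots<t_N=T$, $\mathcal T=\{t_1,\dots,t_N\}$, strikes $0=x_0<x_1<\dots<x_J$, and nonnegative numbers $\hat p_{j,n}$ ($0\le j\le J+1$, $1\le n\le N$). Write $\ell_n=\lim_{x\uparrow\infty}a(x,t_n)/x$. $\mathbf L_H^{\mathcal X,\infty,\mathcal T}$: over reals $e^1_{j,n},e^2_{j,n},v_{j,n}$ ($0\le j\le J+1$, $1\le n\le N$), $d^1_{j,n},d^2_{j,n}$ ($0\le j\le J+1$, $1\le n\le N-1$), with $e^1_{j,N}=e^2_{j,1}=0$ for all $j$, minimise $\sum_{n}\sum_{j=0}^{J+1}(e^1_{j,n}+e^2_{j,n})\hat p_{j,n}+\sum_{j=0}^{J+1}v_{j,N}\hat p_{j,N}$ subject to $v_{j,n}\ge0$ and, for $1\le n\le N$ in (i) and $1\le n\le N-1$ in (ii),(iii): (i) $v_{j,n}\ge a(x_j,t_n)$ for $0\le j\le J$, and $v_{J+1,n}\ge\ell_n$; (ii) $e^1_{j,n}+e^2_{k,n+1}+(x_k-x_j)d^1_{j,n}\ge0$ ($0\le j,k\le J$); $e^1_{J+1,n}-d^1_{J+1,n}\ge0$; $e^2_{J+1,n+1}+d^1_{j,n}\ge0$ ($0\le j\le J$); $e^1_{J+1,n}+e^2_{J+1,n+1}\ge0$; (iii) $e^1_{j,n}+e^2_{k,n+1}+(x_k-x_j)d^2_{j,n}-v_{j,n}+v_{k,n+1}\ge0$ ($0\le j,k\le J$); $e^1_{J+1,n}-d^2_{J+1,n}-v_{J+1,n}\ge0$;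 $e^2_{J+1,n+1}+d^2_{j,n}+v_{J+1,n+1}\ge0$ ($0\le j\le J$); $e^1_{J+1,n}+e^2_{J+1,n+1}-v_{J+1,n}+v_{J+1,n+1}\ge0$. Extended linear interpolation of $(h_0,\dots,h_{J+1})$: $\bar h(x_j)=h_j$; $\bar h(x)=\frac{x_{j+1}-x}{x_{j+1}-x_j}h_j+\frac{x-x_j}{x_{j+1}-x_j}h_{j+1}$ for $x_j<x<x_{j+1}$, $j<J$; $\bar h(x)=h_J+(x-x_J)h_{J+1}$ for $x>x_J$. Mixed interpolation on $[0,x_J]$ ($\delta\in\{1,2\}$, $1\le n\le N-1$): with $u^1_{j,n}=\frac{e^1_{j+1,n}-e^1_{j,n}}{x_{j+1}-x_j}$, $u^2_{j,n}=\frac{(e^1_{j+1,n}-v_{j+1,n})-(e^1_{j,n}-v_{j,n})}{x_{j+1}-x_j}$ ($0\le j<J$), set $\tilde d^\delta_n(x_j)=d^\delta_{j,n}$ and for $x\in(x_j,x_{j+1})$: $\tilde d^\delta_n(x)=d^\delta_{j,n}$ if $d^\delta_{j,n}\le u^\delta_{j,n}$; $=d^\delta_{j+1,n}$ if $d^\delta_{j,n}>u^\delta_{j,n}$ and $d^\delta_{j+1,n}\ge u^\delta_{j,n}$; $=u^\delta_{j,n}$ if $d^\delta_{j+1,n}<u^\delta_{j,n}<d^\delta_{j,n}$. *)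

theory Defs
  imports "HOL-Analysis.Analysis"
begin

text \<open>Extended linear interpolation of h 0, ..., h (J+1) on the grid X 0 < ... < X J;
  the last value h (J+1) is the slope beyond X J.  Only meaningful for y \<ge> 0 = X 0.\<close>
definition ext_interp :: "(nat \<Rightarrow> real) \<Rightarrow> nat \<Rightarrow> (nat \<Rightarrow> real) \<Rightarrow> real \<Rightarrow> real" where
  "ext_interp X J h y =
     (if X J < y then h J + (y - X J) * h (Suc J)
      else if (\<exists>j\<le>J. y = X j) then h (THE j. j \<le> J \<and> y = X j)
      else (let j = (THE j. j < J \<and> X j < y \<and> y < X (Suc j)) in
              (X (Suc j) - y) / (X (Suc j) - X j) * h j
            + (y - X j) / (X (Suc j) - X j) * h (Suc j)))"

definition mixed_interp :: "(nat \<Rightarrow> real) \<Rightarrow> nat \<Rightarrow> (nat \<Rightarrow> real) \<Rightarrow> (nat \<Rightarrow> real) \<Rightarrow> real \<Rightarrow> real" where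
  "mixed_interp X J d u y =
     (if (\<exists>j\<le>J. y = X j) then d (THE j. j \<le> J \<and> y = X j)
      else (let j = (THE j. j < J \<and> X j < y \<and> y < X (Suc j)) in
              if d j \<le> u j then d j
              else if u j \<le> d (Suc j) then d (Suc j)
              else u j))"

end

theory Submission
  imports Defs "HOL-Real_Asymp.Real_Asymp"
begin

text \<open>Extended linear interpolation is linear in the data, positive, and reproduces affine
  functions; hence an inequality of the form ``interpolant plus affine function \<open>\<ge> 0\<close>'' holds on
  \<open>[0, \<infinity>)\<close> as soon as it holds at the strikes and for the slope beyond \<open>x\<^sub>J\<close>.

  For \<open>\<bar>v\<^sub>n \<ge> a(\<cdot>, t\<^sub>n)\<close> this is combined with convexity of \<open>a\<close> between strikes, and beyond \<open>x\<^sub>J\<close>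
  with the fact that the secant slopes of a convex function are bounded by its asymptotic slope
  \<open>\<ell>\<^sub>n \<le> v\<^sub>J\<^sub>+\<^sub>1\<^sub>,\<^sub>n\<close>.  For the other two inequalities fix \<open>x\<close>: the left-hand side is
  \<open>\<bar>e\<^sup>2(y)\<close> plus an affine function of \<open>y\<close>, so it suffices to treat \<open>y = x\<^sub>k\<close> and the slope
  beyond \<open>x\<^sub>J\<close>.  For \<open>y = x\<^sub>k\<close> and \<open>x\<close> in a segment \<open>[x\<^sub>j, x\<^sub>j\<^sub>+\<^sub>1]\<close>, the mixed interpolation is
  chosen exactly so that the inequality follows from the grid inequalities at \<open>x\<^sub>j\<close> or
  \<open>x\<^sub>j\<^sub>+\<^sub>1\<close>: the discrepancy is a product of a distance and a slope difference of the right sign,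
  or, when \<open>\<tilde>d = u\<^sub>j\<close>, the expression is affine in \<open>x\<close> and \<open>x\<^sub>k\<close> lies outside the open segment.\<close>

text \<open>The interpolated slope \<open>\<tilde>d\<^sup>\<delta>\<^sub>n\<close> on all of \<open>[0, \<infinity>)\<close>; \<open>F\<close> is \<open>e\<^sup>1\<^sub>\<cdot>\<^sub>,\<^sub>n\<close> for \<open>\<delta> = 1\<close>
  and \<open>e\<^sup>1\<^sub>\<cdot>\<^sub>,\<^sub>n - v\<^sub>\<cdot>\<^sub>,\<^sub>n\<close> for \<open>\<delta> = 2\<close>.\<close>
definition mixed_slope ::
    "(nat \<Rightarrow> real) \<Rightarrow> nat \<Rightarrow> (nat \<Rightarrow> real) \<Rightarrow> (nat \<Rightarrow> real) \<Rightarrow> real \<Rightarrow> real" where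
  "mixed_slope x J F d y =
     (if y \<le> x J then mixed_interp x J d (\<lambda>j. (F (Suc j) - F j) / (x (Suc j) - x j)) y
      else min (d J) (F (Suc J)))"

lemma segment_containing:
  fixes x :: "nat \<Rightarrow> real"
  assumes "1 \<le> m" "x 0 \<le> y" "y \<le> x m"
  obtains j where "j < m" "x j \<le> y" "y \<le> x (Suc j)"
proof -
  have "\<exists>j<m. x j \<le> y \<and> y \<le> x (Suc j)"
    using assms
  proof (induction m)
    case 0
    then show ?case by simp
  next
    case (Suc m)
    show ?case
    proof (cases "1 \<le> m \<and> y \<le> x m")
      case True
      then show ?thesis using Suc less_SucI by blast
    next
      case False
      then have "x m \<le> y" using Suc.prems by (cases "m = 0") auto
      then show ?thesis using Suc.prems by auto
    qed
  qed
  then show ?thesis using that by blast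
qed

lemma ext_interp_tail: "x J < y \<Longrightarrow> ext_interp x J h y = h J + (y - x J) * h (Suc J)"
  by (simp add: ext_interp_def)

lemma ext_interp_linear:
  "ext_interp x J (\<lambda>j. f j + c * g j) y = ext_interp x J f y + c * ext_interp x J g y"
proof -
  define i where "i = (THE j. j \<le> J \<and> y = x j)"
  define k where "k = (THE j. j < J \<and> x j < y \<and> y < x (Suc j))"
  define p where "p = (x (Suc k) - y) / (x (Suc k) - x k)"
  define q where "q = (y - x k) / (x (Suc k) - x k)"
  have "ext_interp x J h y = (if x J < y then h J + (y - x J) * h (Suc J)
      else if \<exists>j\<le>J. y = x j then h i else p * h k + q * h (Suc k))" for h
    unfolding ext_interp_def Let_def i_def k_def p_def q_def by simp
  then show ?thesis by (auto simp: algebra_simps)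
qed

lemma convex_secant_le_asymptotic_slope:
  fixes f :: "real \<Rightarrow> real"
  assumes convex: "convex_on {0..} f" and lim: "((\<lambda>w. f w / w) \<longlongrightarrow> l) at_top"
    and c: "0 \<le> c" "c < y"
  shows "f y - f c \<le> l * (y - c)"
proof -
  define g where "g w = (f w - f c) / (w - c)" for w
  have secant_mono: "\<forall>\<^sub>F w in at_top. g y \<le> g w"
    unfolding eventually_at_top_linorder
  proof (intro exI allI impI)
    fix w assume "y \<le> w"
    then show "g y \<le> g w"
    proof (cases "y = w")
      case False
      then have "(f c - f y) / (c - y) \<le> (f c - f w) / (c - w)"
        using convex_on_slope_le(1)[OF convex, of c w y] \<open>y \<le> w\<close> c by auto
      then show ?thesis unfolding g_def by (metis minus_diff_eq minus_divide_divide)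
    qed simp
  qed
  have "((\<lambda>w. f w / w * (w / (w - c)) - f c / (w - c)) \<longlongrightarrow> l * 1 - 0) at_top"
  proof (intro tendsto_diff tendsto_mult lim)
    show "((\<lambda>w. w / (w - c)) \<longlongrightarrow> 1) at_top" by real_asymp
    show "((\<lambda>w. f c / (w - c)) \<longlongrightarrow> 0) at_top" by real_asymp
  qed
  moreover have "\<forall>\<^sub>F w in at_top. f w / w * (w / (w - c)) - f c / (w - c) = g w"
    using eventually_gt_at_top[of "c + 1"]
  proof eventually_elim
    case (elim w)
    then show ?case using c by (simp add: g_def diff_divide_distrib)
  qed
  ultimately have "(g \<longlongrightarrow> l) at_top" using Lim_transform_eventually by fastforce
  then have "g y \<le> l" using tendsto_lowerbound[OF _ secant_mono] by simp
  then show ?thesis using c unfolding g_def by (simp add: pos_divide_le_eq)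
qed

locale strike_grid =
  fixes x :: "nat \<Rightarrow> real" and J :: nat
  assumes x_0: "x 0 = 0" and J_pos: "1 \<le> J" and x_step: "\<forall>j<J. x j < x (Suc j)"
begin

lemma x_less: "i < j \<Longrightarrow> j \<le> J \<Longrightarrow> x i < x j"
proof (induction j)
  case (Suc j)
  have "x j < x (Suc j)" using x_step Suc.prems by simp
  moreover have "x i \<le> x j" using Suc by (cases "i = j") auto
  ultimately show ?case by linarith
qed simp

lemma x_le: "i \<le> j \<Longrightarrow> j \<le> J \<Longrightarrow> x i \<le> x j"
  using x_less[of i j] by (cases "i = j") auto

lemma x_nonneg: "j \<le> J \<Longrightarrow> 0 \<le> x j"
  using x_le[of 0 j] x_0 by simp

lemma x_eq_iff: "i \<le> J \<Longrightarrow> j \<le> J \<Longrightarrow> x i = x j \<longleftrightarrow> i = j"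
  using x_less[of i j] x_less[of j i] by (metis less_irrefl nat_neq_iff)

lemma segment_of_point:
  assumes "0 \<le> y" "y \<le> x J"
  obtains j where "j < J" "x j \<le> y" "y \<le> x (Suc j)"
  using segment_containing[of J x y] J_pos x_0 assms by auto

lemma open_segment_not_node:
  assumes "j < J" "x j < y" "y < x (Suc j)"
  shows "\<not> (\<exists>i\<le>J. y = x i)"
proof
  assume "\<exists>i\<le>J. y = x i"
  then obtain i where i: "i \<le> J" "y = x i" by blast
  show False
  proof (cases "i \<le> j")
    case True
    then show False using x_le[of i j] assms i by simp
  next
    case False
    then show False using x_le[of "Suc j" i] assms i by simp
  qed
qed

lemma open_segment_index:
  assumes "j < J" "x j < y" "y < x (Suc j)"
  shows "(THE i. i < J \<and> x i < y \<and> y < x (Suc i)) = j"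
proof (rule the_equality)
  fix i assume i: "i < J \<and> x i < y \<and> y < x (Suc i)"
  have False if "i < j" using x_le[of "Suc i" j] that i assms by simp
  moreover have False if "j < i" using x_le[of "Suc j" i] that i assms by simp
  ultimately show "i = j" by (metis nat_neq_iff)
qed (use assms in simp)

lemma node_index: "j \<le> J \<Longrightarrow> (THE i. i \<le> J \<and> x j = x i) = j"
  using x_eq_iff by (intro the_equality) auto

lemma ext_interp_node: "j \<le> J \<Longrightarrow> ext_interp x J h (x j) = h j"
  using x_le[of j J] node_index by (auto simp: ext_interp_def)

lemma ext_interp_segment:
  assumes j: "j < J" and y: "x j \<le> y" "y \<le> x (Suc j)"
  shows "ext_interp x J h y = h j + (y - x j) / (x (Suc j) - x j) * (h (Suc j) - h j)"
proof -
  have step: "x j < x (Suc j)" using x_step j by simp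
  consider "y = x j" | "y = x (Suc j)" | "x j < y" "y < x (Suc j)"
    using y by linarith
  then show ?thesis
  proof cases
    case 3
    moreover have "\<not> x J < y" using x_le[of "Suc j" J] j 3 by simp
    ultimately have "ext_interp x J h y = (x (Suc j) - y) / (x (Suc j) - x j) * h j
        + (y - x j) / (x (Suc j) - x j) * h (Suc j)"
      using open_segment_not_node[OF j 3] open_segment_index[OF j 3]
      by (auto simp: ext_interp_def Let_def)
    also have "\<dots> = h j + (y - x j) / (x (Suc j) - x j) * (h (Suc j) - h j)"
      using step by (simp add: divide_simps) (simp add: algebra_simps)
    finally show ?thesis .
  qed (use ext_interp_node j step in auto)
qed

lemma ext_interp_convex_combination:
  assumes "0 \<le> y" "y \<le> x J"
  obtains j \<theta> where "j < J" "0 \<le> \<theta>" "\<theta> \<le> 1" "y = (1 - \<theta>) * x j + \<theta> * x (Suc j)"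
    "\<And>h. ext_interp x J h y = (1 - \<theta>) * h j + \<theta> * h (Suc j)"
proof -
  obtain j where j: "j < J" and y: "x j \<le> y" "y \<le> x (Suc j)"
    using segment_of_point assms by blast
  define \<theta> where "\<theta> = (y - x j) / (x (Suc j) - x j)"
  have step: "x j < x (Suc j)" using x_step j by simp
  show thesis
  proof (rule that[OF j])
    show "0 \<le> \<theta>" "\<theta> \<le> 1" using step y by (simp_all add: \<theta>_def)
    show "y = (1 - \<theta>) * x j + \<theta> * x (Suc j)"
      using step by (simp add: \<theta>_def divide_simps) (simp add: algebra_simps)
    show "ext_interp x J h y = (1 - \<theta>) * h j + \<theta> * h (Suc j)" for h
      unfolding ext_interp_segment[OF j y] \<theta>_def[symmetric] by (simp add: algebra_simps)
  qed
qed

lemma ext_interp_nonneg: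
  assumes h: "\<forall>j\<le>Suc J. 0 \<le> h j" and y: "0 \<le> y"
  shows "0 \<le> ext_interp x J h y"
proof (cases "x J < y")
  case True
  then show ?thesis using h by (simp add: ext_interp_tail)
next
  case False
  then obtain j \<theta> where "j < J" "0 \<le> \<theta>" "\<theta> \<le> 1"
    and "ext_interp x J h y = (1 - \<theta>) * h j + \<theta> * h (Suc j)"
    using ext_interp_convex_combination y by (metis not_less)
  then show ?thesis using h by simp
qed

lemma ext_interp_affine:
  assumes y: "0 \<le> y"
  shows "ext_interp x J (\<lambda>j. if j \<le> J then \<alpha> * x j + \<beta> else \<alpha>) y = \<alpha> * y + \<beta>"
proof (cases "x J < y")
  case True
  then show ?thesis by (simp add: ext_interp_tail algebra_simps)
next
  case False
  then obtain j \<theta> where "j < J" and y_comb: "y = (1 - \<theta>) * x j + \<theta> * x (Suc j)"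
    and "\<And>h. ext_interp x J h y = (1 - \<theta>) * h j + \<theta> * h (Suc j)"
    using ext_interp_convex_combination y by (metis not_less)
  then have "ext_interp x J (\<lambda>j. if j \<le> J then \<alpha> * x j + \<beta> else \<alpha>) y
      = (1 - \<theta>) * (\<alpha> * x j + \<beta>) + \<theta> * (\<alpha> * x (Suc j) + \<beta>)"
    by simp
  also have "\<dots> = \<alpha> * y + \<beta>"
    unfolding y_comb by (simp add: algebra_simps)
  finally show ?thesis .
qed

lemma ext_interp_plus_affine_nonneg:
  assumes nodes: "\<forall>k\<le>J. 0 \<le> G k + \<alpha> * x k + \<beta>" and tail: "0 \<le> G (Suc J) + \<alpha>"
    and y: "0 \<le> y"
  shows "0 \<le> ext_interp x J G y + \<alpha> * y + \<beta>"
proof -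
  have "ext_interp x J G y + \<alpha> * y + \<beta>
      = ext_interp x J (\<lambda>j. G j + 1 * (if j \<le> J then \<alpha> * x j + \<beta> else \<alpha>)) y"
    using ext_interp_linear[of x J G 1 _ y] ext_interp_affine[OF y] by simp
  moreover have "0 \<le> \<dots>"
    using nodes tail y by (intro ext_interp_nonneg) (auto simp: le_Suc_eq add.assoc)
  ultimately show ?thesis by simp
qed

lemma ext_interp_ge_convex:
  fixes f :: "real \<Rightarrow> real"
  assumes convex: "convex_on {0..} f" and lim: "((\<lambda>w. f w / w) \<longlongrightarrow> l) at_top"
    and nodes: "\<forall>j\<le>J. f (x j) \<le> v j" and tail: "l \<le> v (Suc J)" and y: "0 \<le> y"
  shows "f y \<le> ext_interp x J v y"
proof (cases "x J < y")
  case True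
  have "f y - f (x J) \<le> l * (y - x J)"
    using convex_secant_le_asymptotic_slope[OF convex lim x_nonneg[of J]] True by simp
  also have "\<dots> \<le> v (Suc J) * (y - x J)"
    using tail True by (intro mult_right_mono) auto
  finally have "f y \<le> f (x J) + (y - x J) * v (Suc J)" by (simp add: algebra_simps)
  moreover have "f (x J) \<le> v J" using nodes by simp
  ultimately show ?thesis using True by (simp add: ext_interp_tail)
next
  case False
  then obtain j \<theta> where j: "j < J" and \<theta>: "0 \<le> \<theta>" "\<theta> \<le> 1"
    "y = (1 - \<theta>) * x j + \<theta> * x (Suc j)"
    "\<And>h. ext_interp x J h y = (1 - \<theta>) * h j + \<theta> * h (Suc j)"
    using ext_interp_convex_combination y by (metis not_less)
  have "f y \<le> (1 - \<theta>) * f (x j) + \<theta> * f (x (Suc j))"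
    using convex_onD[OF convex, of \<theta> "x j" "x (Suc j)"] \<theta>(1-3) x_nonneg j by simp
  also have "\<dots> \<le> (1 - \<theta>) * v j + \<theta> * v (Suc j)"
    using nodes j \<theta>(1,2) by (intro add_mono mult_left_mono) auto
  finally show ?thesis using \<theta>(4) by simp
qed

lemma mixed_interp_node: "j \<le> J \<Longrightarrow> mixed_interp x J d u (x j) = d j"
  using node_index by (auto simp: mixed_interp_def)

lemma mixed_interp_segment_cases:
  assumes j: "j < J" and y: "x j \<le> y" "y \<le> x (Suc j)"
  shows "mixed_interp x J d u y = d j \<and> 0 \<le> (y - x j) * (u j - d j)
       \<or> mixed_interp x J d u y = d (Suc j) \<and> 0 \<le> (x (Suc j) - y) * (d (Suc j) - u j)
       \<or> mixed_interp x J d u y = u j \<and> d (Suc j) \<le> u j \<and> u j \<le> d j"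
proof -
  consider "y = x j" | "y = x (Suc j)" | "x j < y" "y < x (Suc j)"
    using y by linarith
  then show ?thesis
  proof cases
    case 3
    then have "mixed_interp x J d u y
        = (if d j \<le> u j then d j else if u j \<le> d (Suc j) then d (Suc j) else u j)"
      using open_segment_not_node[OF j 3] open_segment_index[OF j 3]
      by (auto simp: mixed_interp_def Let_def)
    then show ?thesis using 3 by auto
  qed (use mixed_interp_node j in auto)
qed

lemma mixed_interp_node_bound:
  fixes F G d :: "nat \<Rightarrow> real"
  assumes grid: "\<forall>j\<le>J. \<forall>k\<le>J. 0 \<le> F j + G k + (x k - x j) * d j"
    and j: "j < J" and y: "x j \<le> y" "y \<le> x (Suc j)" and k: "k \<le> J"
  defines "u \<equiv> \<lambda>j. (F (Suc j) - F j) / (x (Suc j) - x j)"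
  shows "0 \<le> ext_interp x J F y + G k + (x k - y) * mixed_interp x J d u y"
proof -
  have F_y: "ext_interp x J F y = F j + (y - x j) * u j"
    using ext_interp_segment[OF j y] by (simp add: u_def)
  have "x j < x (Suc j)" using x_step j by simp
  then have F_Suc: "F (Suc j) = F j + (x (Suc j) - x j) * u j"
    by (simp add: u_def)
  have at_j: "0 \<le> F j + G k + (x k - x j) * d j"
    using grid j k by simp
  have at_Suc: "0 \<le> F (Suc j) + G k + (x k - x (Suc j)) * d (Suc j)"
    using grid j k by simp
  consider (left) "mixed_interp x J d u y = d j" "0 \<le> (y - x j) * (u j - d j)"
    | (right) "mixed_interp x J d u y = d (Suc j)" "0 \<le> (x (Suc j) - y) * (d (Suc j) - u j)"
    | (slope) "mixed_interp x J d u y = u j" "d (Suc j) \<le> u j" "u j \<le> d j"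
    using mixed_interp_segment_cases[OF j y] by blast
  then show ?thesis
  proof cases
    case left
    then have "ext_interp x J F y + G k + (x k - y) * mixed_interp x J d u y
        = (F j + G k + (x k - x j) * d j) + (y - x j) * (u j - d j)"
      by (simp add: F_y algebra_simps)
    then show ?thesis using at_j left by linarith
  next
    case right
    then have "ext_interp x J F y + G k + (x k - y) * mixed_interp x J d u y
        = (F (Suc j) + G k + (x k - x (Suc j)) * d (Suc j)) + (x (Suc j) - y) * (d (Suc j) - u j)"
      by (simp add: F_y F_Suc algebra_simps)
    then show ?thesis using at_Suc right by linarith
  next
    case slope
    \<comment> \<open>the expression is now affine in \<open>y\<close>, and \<open>x\<^sub>k\<close> lies outside \<open>(x\<^sub>j, x\<^sub>j\<^sub>+\<^sub>1)\<close>\<close>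
    then have expr: "ext_interp x J F y + G k + (x k - y) * mixed_interp x J d u y
        = F j + G k + (x k - x j) * u j"
      by (simp add: F_y algebra_simps)
    show ?thesis
    proof (cases "k \<le> j")
      case True
      then have "(x k - x j) * d j \<le> (x k - x j) * u j"
        using x_le[of k j] j slope by (intro mult_left_mono_neg) auto
      then show ?thesis using expr at_j by linarith
    next
      case False
      then have "(x k - x (Suc j)) * d (Suc j) \<le> (x k - x (Suc j)) * u j"
        using x_le[of "Suc j" k] k slope by (intro mult_left_mono) auto
      moreover have "F j + G k + (x k - x j) * u j = F (Suc j) + G k + (x k - x (Suc j)) * u j"
        by (simp add: F_Suc algebra_simps)
      ultimately show ?thesis using expr at_Suc by linarith
    qed
  qed
qed

lemma mixed_slope_node_bound:
  fixes F G d :: "nat \<Rightarrow> real"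
  assumes grid: "\<forall>j\<le>J. \<forall>k\<le>J. 0 \<le> F j + G k + (x k - x j) * d j"
    and k: "k \<le> J" and y: "0 \<le> y"
  shows "0 \<le> ext_interp x J F y + G k + (x k - y) * mixed_slope x J F d y"
proof (cases "y \<le> x J")
  case True
  then obtain j where "j < J" "x j \<le> y" "y \<le> x (Suc j)"
    using segment_of_point y by blast
  then show ?thesis
    using mixed_interp_node_bound[OF grid _ _ _ k] True by (simp add: mixed_slope_def)
next
  case False
  define m where "m = min (d J) (F (Suc J))"
  have "ext_interp x J F y + G k + (x k - y) * mixed_slope x J F d y
      = (F J + G k + (x k - x J) * m) + (y - x J) * (F (Suc J) - m)"
    using False by (simp add: mixed_slope_def ext_interp_tail m_def algebra_simps)
  moreover have "(x k - x J) * d J \<le> (x k - x J) * m"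
    using x_le[OF k] by (intro mult_left_mono_neg) (auto simp: m_def)
  moreover have "0 \<le> (y - x J) * (F (Suc J) - m)"
    using False by (simp add: m_def)
  moreover have "0 \<le> F J + G k + (x k - x J) * d J"
    using grid k by simp
  ultimately show ?thesis by linarith
qed

lemma mixed_slope_lower_bound:
  assumes d: "\<forall>j\<le>J. c \<le> d j" and F: "c \<le> F (Suc J)" and y: "0 \<le> y"
  shows "c \<le> mixed_slope x J F d y"
proof (cases "y \<le> x J")
  case True
  then obtain j where j: "j < J" and "x j \<le> y" "y \<le> x (Suc j)"
    using segment_of_point y by blast
  moreover have "c \<le> d j" "c \<le> d (Suc j)" using d j by auto
  ultimately have "c \<le> mixed_interp x J d u y" for u
    using mixed_interp_segment_cases[of j y d u] by auto
  then show ?thesis using True by (simp add: mixed_slope_def)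
next
  case False
  then show ?thesis using d F by (simp add: mixed_slope_def)
qed

lemma mixed_slope_dual_feasible:
  fixes F G d :: "nat \<Rightarrow> real"
  assumes grid: "\<forall>j\<le>J. \<forall>k\<le>J. 0 \<le> F j + G k + (x k - x j) * d j"
    and slope: "\<forall>j\<le>J. 0 \<le> G (Suc J) + d j" and tail: "0 \<le> F (Suc J) + G (Suc J)"
    and y: "0 \<le> y" and z: "0 \<le> z"
  shows "0 \<le> ext_interp x J F y + ext_interp x J G z + (z - y) * mixed_slope x J F d y"
proof -
  let ?D = "mixed_slope x J F d y"
  have "0 \<le> ext_interp x J G z + ?D * z + (ext_interp x J F y - y * ?D)"
  proof (rule ext_interp_plus_affine_nonneg[OF _ _ z])
    show "\<forall>k\<le>J. 0 \<le> G k + ?D * x k + (ext_interp x J F y - y * ?D)"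
      using mixed_slope_node_bound[OF grid _ y] by (simp add: algebra_simps)
    have "- G (Suc J) \<le> ?D"
      using slope tail y by (intro mixed_slope_lower_bound) auto
    then show "0 \<le> G (Suc J) + ?D" by simp
  qed
  then show ?thesis by (simp add: algebra_simps)
qed

end

theorem mainTheorem11:
  fixes N J :: nat
    and t :: "nat \<Rightarrow> real"
    and x :: "nat \<Rightarrow> real"
    and a :: "real \<Rightarrow> real \<Rightarrow> real"
    and ell :: "nat \<Rightarrow> real" and R :: real
    and e1 e2 v d1 d2 :: "nat \<Rightarrow> nat \<Rightarrow> real"
  assumes N: "N \<ge> 1" and J: "J \<ge> 1"
    and t0: "t 0 = 0" and t_mono: "\<forall>n<N. t n < t (Suc n)"
    and x0: "x 0 = 0" and x_mono: "\<forall>j<J. x j < x (Suc j)"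
    and a_nonneg: "\<forall>n\<in>{1..N}. \<forall>y\<ge>0. a y (t n) \<ge> 0"
    and a_convex: "\<forall>n\<in>{1..N}. convex_on {0..} (\<lambda>y. a y (t n))"
    and ell_lim: "\<forall>n\<in>{1..N}. ((\<lambda>y. a y (t n) / y) \<longlongrightarrow> ell n) at_top"
    and ell_R: "\<forall>n\<in>{1..N}. ell n < R"
    and e1_N: "\<forall>j. e1 j N = 0" and e2_1: "\<forall>j. e2 j 1 = 0"
    and v_nonneg: "\<forall>n\<in>{1..N}. \<forall>j\<le>Suc J. v j n \<ge> 0"
    and i_a: "\<forall>n\<in>{1..N}. \<forall>j\<le>J. v j n \<ge> a (x j) (t n)"
    and i_l: "\<forall>n\<in>{1..N}. v (Suc J) n \<ge> ell n"
    and ii_1: "\<forall>n\<in>{1..N-1}. \<forall>j\<le>J. \<forall>k\<le>J.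
                 e1 j n + e2 k (Suc n) + (x k - x j) * d1 j n \<ge> 0"
    and ii_2: "\<forall>n\<in>{1..N-1}. e1 (Suc J) n - d1 (Suc J) n \<ge> 0"
    and ii_3: "\<forall>n\<in>{1..N-1}. \<forall>j\<le>J. e2 (Suc J) (Suc n) + d1 j n \<ge> 0"
    and ii_4: "\<forall>n\<in>{1..N-1}. e1 (Suc J) n + e2 (Suc J) (Suc n) \<ge> 0"
    and iii_1: "\<forall>n\<in>{1..N-1}. \<forall>j\<le>J. \<forall>k\<le>J.
                 e1 j n + e2 k (Suc n) + (x k - x j) * d2 j n - v j n + v k (Suc n) \<ge> 0"
    and iii_2: "\<forall>n\<in>{1..N-1}. e1 (Suc J) n - d2 (Suc J) n - v (Suc J) n \<ge> 0"
    and iii_3: "\<forall>n\<in>{1..N-1}. \<forall>j\<le>J. e2 (Suc J) (Suc n) + d2 j n + v (Suc J) (Suc n) \<ge> 0"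
    and iii_4: "\<forall>n\<in>{1..N-1}.
                 e1 (Suc J) n + e2 (Suc J) (Suc n) - v (Suc J) n + v (Suc J) (Suc n) \<ge> 0"
  defines "ebar1 \<equiv> \<lambda>n. if n = N then (\<lambda>_. 0) else ext_interp x J (\<lambda>j. e1 j n)"
    and "ebar2 \<equiv> \<lambda>n. if n = 1 then (\<lambda>_. 0) else ext_interp x J (\<lambda>j. e2 j n)"
    and "vbar \<equiv> \<lambda>n. ext_interp x J (\<lambda>j. v j n)"
    and "dt1 \<equiv> \<lambda>n y. if y \<le> x J then mixed_interp x J (\<lambda>j. d1 j n) (\<lambda>j. (e1 (Suc j) n - e1 j n) / (x (Suc j) - x j)) y
                     else min (d1 J n) (e1 (Suc J) n)"
    and "dt2 \<equiv> \<lambda>n y. if y \<le> x J then mixed_interp x J (\<lambda>j. d2 j n) (\<lambda>j. ((e1 (Suc j) n - v (Suc j) n) - (e1 j n - v j n)) / (x (Suc j) - x j)) y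
                     else min (d2 J n) (e1 (Suc J) n - v (Suc J) n)"
  shows "(\<forall>n\<in>{1..N}. \<forall>y\<ge>0. vbar n y \<ge> a y (t n))
       \<and> (\<forall>n\<in>{1..<N}. \<forall>y\<ge>0. \<forall>z\<ge>0.
            ebar1 n y + ebar2 (Suc n) z + (z - y) * dt1 n y \<ge> 0)
       \<and> (\<forall>n\<in>{1..<N}. \<forall>y\<ge>0. \<forall>z\<ge>0.
            ebar1 n y + ebar2 (Suc n) z + (z - y) * dt2 n y - vbar n y + vbar (Suc n) z \<ge> 0)"
proof -
  interpret strike_grid x J
    using x0 J x_mono by unfold_locales
  have dt1: "dt1 n = mixed_slope x J (\<lambda>j. e1 j n) (\<lambda>j. d1 j n)" for n
    unfolding dt1_def mixed_slope_def by simp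
  have dt2: "dt2 n = mixed_slope x J (\<lambda>j. e1 j n - v j n) (\<lambda>j. d2 j n)" for n
    unfolding dt2_def mixed_slope_def by simp
  have ebar: "ebar1 n = ext_interp x J (\<lambda>j. e1 j n)"
      "ebar2 (Suc n) = ext_interp x J (\<lambda>j. e2 j (Suc n))" if "n \<in> {1..<N}" for n
    using that by (auto simp: ebar1_def ebar2_def)
  show ?thesis
  proof (intro conjI ballI allI impI)
    fix n and y :: real assume "n \<in> {1..N}" "0 \<le> y"
    then show "a y (t n) \<le> vbar n y"
      unfolding vbar_def using a_convex ell_lim i_a i_l
      by (intro ext_interp_ge_convex[of "\<lambda>y. a y (t n)" "ell n"]) auto
  next
    fix n and y z :: real assume n: "n \<in> {1..<N}" and yz: "0 \<le> y" "0 \<le> z"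
    then show "0 \<le> ebar1 n y + ebar2 (Suc n) z + (z - y) * dt1 n y"
      unfolding ebar[OF n] dt1 using ii_1 ii_3 ii_4
      by (intro mixed_slope_dual_feasible) auto
  next
    fix n and y z :: real assume n: "n \<in> {1..<N}" and yz: "0 \<le> y" "0 \<le> z"
    have "0 \<le> ext_interp x J (\<lambda>j. e1 j n - v j n) y
        + ext_interp x J (\<lambda>j. e2 j (Suc n) + v j (Suc n)) z + (z - y) * dt2 n y"
      unfolding dt2 using n yz iii_1 iii_3 iii_4
      by (intro mixed_slope_dual_feasible) (auto simp: algebra_simps)
    moreover have "ext_interp x J (\<lambda>j. e1 j n - v j n) y = ebar1 n y - vbar n y"
      using ext_interp_linear[of x J "\<lambda>j. e1 j n" "-1" "\<lambda>j. v j n" y]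
      by (simp add: ebar[OF n] vbar_def)
    moreover have "ext_interp x J (\<lambda>j. e2 j (Suc n) + v j (Suc n)) z = ebar2 (Suc n) z + vbar (Suc n) z"
      using ext_interp_linear[of x J "\<lambda>j. e2 j (Suc n)" 1 "\<lambda>j. v j (Suc n)" z]
      by (simp add: ebar[OF n] vbar_def)
    ultimately show "0 \<le> ebar1 n y + ebar2 (Suc n) z + (z - y) * dt2 n y - vbar n y + vbar (Suc n) z"
      by simp
  qed
qed

end
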